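(* Let $k\in\mathbb{N}_0\cup\{\infty\}$, let $E,F$ be locally convex super vector spaces, $\mathcal{U}\subseteq\overline{E}^{(k)}$ an open subfunctor and $f\colon\mathcal{U}\to\overline{F}^{(k)}$ a natural transformation such that every $f_\Lambda$ ($\Lambda\in\mathbf{Gr}^{(k)}$) is smooth. Let $n,m\in\mathbb{N}$ with $\Lambda_m\in\mathbf{Gr}^{(k)}$, let $x\in\mathcal{U}_{\mathbb{R}}\subseteq\mathcal{U}_{\Lambda_m}$, and for $1\le i\le n$ let $y_i\in\lambda_{I_i}E_{|I_i|\bmod 2}\subseteq\overline{E}^{(k)}_{\Lambda_m}$ with $\emptyset\neq I_i\subseteq\{1,\dots,m\}$. Then $$d^nf_{\Lambda_m}(x)(y_1,\dots,y_n)\in\lambda_{I_1}\cdots\lambda_{I_n}F_{\ell\bmod 2},\qquad \ell:=\Big|\bigcup_{i=1}^nI_i\Big|,$$ and if the sets $I_1,\dots,I_n$ are not pairwise disjoint, then $d^nf_{\Lambda_m}(x)(y_1,\dots,y_n)=0$.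
   Context: Grassmann algebras: $\Lambda_k=\mathbb{R}[\lambda_1,\dots,\lambda_k]$ with $\lambda_i\lambda_j=-\lambda_j\lambda_i$, $\Lambda_0=\mathbb{R}$, basis $\lambda_I$ ($I\subseteq\{1..k\}$, $\lambda_I=\lambda_{i_1}\cdots\lambda_{i_r}$ for $i_1<\dots<i_r$), grading $\Lambda_{\bar 0},\Lambda_{\bar 1}$ by parity of $|I|$. $\mathbf{Gr}^{(k)}$: category of $\Lambda_0,\dots,\Lambda_k$ with parity-preserving unital algebra homomorphisms. For a locally convex super vector space $E=E_0\oplus E_1$, $\overline{E}^{(k)}_\Lambda=(E_0\otimes\Lambda_{\bar0})\oplus(E_1\otimes\Lambda_{\bar1})$ (product topology), functorial via $\mathrm{id}\otimes\varrho$; for $n\le m$ we identify $\overline{E}^{(k)}_{\Lambda_n}\subseteq\overline{E}^{(k)}_{\Lambda_m}$ via the inclusion $\Lambda_n\hookrightarrow\Lambda_m$, $\lambda_j\mapsto\lambda_j$; in particular $\overline{E}_{\mathbb{R}}=E_0$ and $\mathcal{U}_{\mathbb{R}}\subseteq\mathcal{U}_{\Lambda_m}$. An open subfunctor $\mathcal{U}$ consists of open $\mathcal{U}_\Lambda\subseteq\overline{E}^{(k)}_\Lambda$ stable under all $\overline{E}^{(k)}_\varrho$. Smoothness is Bastiani smoothness; $d^n$ denotes iterated directional derivatives. *)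

theory Defs
  imports "HOL-Analysis.Analysis" "HOL-Library.Extended_Nat"
begin

class lcs = real_vector + topological_ab_group_add + t2_space +
  assumes scaleR_continuous: "open W \<Longrightarrow> c *\<^sub>R x \<in> W \<Longrightarrow>
     \<exists>\<epsilon>>0. \<exists>V. open V \<and> x \<in> V \<and> (\<forall>d y. \<bar>d - c\<bar> < \<epsilon> \<longrightarrow> y \<in> V \<longrightarrow> d *\<^sub>R y \<in> W)"
  assumes locally_convex:
    "open U \<Longrightarrow> x \<in> U \<Longrightarrow> \<exists>V. open V \<and> x \<in> V \<and> V \<subseteq> U \<and>
       (\<forall>u\<in>V. \<forall>w\<in>V. \<forall>t::real. 0 \<le> t \<and> t \<le> 1 \<longrightarrow> t *\<^sub>R u + (1 - t) *\<^sub>R w \<in> V)"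

text \<open>A locally convex super vector space: E = E0 (+) E1 as a topological direct sum
  of (closed) subspaces.\<close>
definition super_lcs :: "'e::lcs set \<Rightarrow> 'e set \<Rightarrow> bool" where
  "super_lcs E0 E1 \<longleftrightarrow> subspace E0 \<and> subspace E1 \<and> E0 \<inter> E1 = {0} \<and>
     (\<forall>v. \<exists>a\<in>E0. \<exists>b\<in>E1. v = a + b) \<and>
     (\<exists>p. continuous_on UNIV p \<and> (\<forall>a\<in>E0. \<forall>b\<in>E1. p (a + b) = a))"

definition parity_part :: "'e set \<Rightarrow> 'e set \<Rightarrow> nat \<Rightarrow> 'e set" where
  "parity_part E0 E1 p = (if even p then E0 else E1)"

text \<open>An element of Lambda_n is represented by its coefficient function on the basis
  lambda_I, I a subset of {1..n}.\<close>
definition Lam :: "nat \<Rightarrow> (nat set \<Rightarrow> real) set" where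
  "Lam n = {a. \<forall>I. \<not> I \<subseteq> {1..n} \<longrightarrow> a I = 0}"

definition gbasis :: "nat set \<Rightarrow> (nat set \<Rightarrow> real)" where
  "gbasis I = (\<lambda>K. if K = I then 1 else 0)"

definition gone :: "nat set \<Rightarrow> real" where
  "gone = gbasis {}"

text \<open>Sign of lambda_I lambda_J = sign * lambda_{I \<union> J} (I, J disjoint).\<close>
definition gsign :: "nat set \<Rightarrow> nat set \<Rightarrow> real" where
  "gsign I J = (-1) ^ card {(i, j). i \<in> I \<and> j \<in> J \<and> j < i}"

definition gmul :: "(nat set \<Rightarrow> real) \<Rightarrow> (nat set \<Rightarrow> real) \<Rightarrow> (nat set \<Rightarrow> real)" where
  "gmul a b = (\<lambda>K. \<Sum>I\<in>Pow K. gsign I (K - I) * a I * b (K - I))"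

definition geven :: "(nat set \<Rightarrow> real) \<Rightarrow> bool" where
  "geven a \<longleftrightarrow> (\<forall>I. odd (card I) \<longrightarrow> a I = 0)"

definition godd :: "(nat set \<Rightarrow> real) \<Rightarrow> bool" where
  "godd a \<longleftrightarrow> (\<forall>I. even (card I) \<longrightarrow> a I = 0)"

text \<open>Morphisms Lambda_a \<rightarrow> Lambda_b of Gr: parity-preserving unital algebra homomorphisms.\<close>
definition gr_hom :: "nat \<Rightarrow> nat \<Rightarrow> ((nat set \<Rightarrow> real) \<Rightarrow> (nat set \<Rightarrow> real)) \<Rightarrow> bool" where
  "gr_hom a b \<rho> \<longleftrightarrow>
     (\<forall>x\<in>Lam a. \<rho> x \<in> Lam b) \<and>
     (\<forall>x\<in>Lam a. \<forall>y\<in>Lam a. \<rho> (\<lambda>I. x I + y I) = (\<lambda>I. \<rho> x I + \<rho> y I)) \<and>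
     (\<forall>x\<in>Lam a. \<forall>c. \<rho> (\<lambda>I. c * x I) = (\<lambda>I. c * \<rho> x I)) \<and>
     \<rho> gone = gone \<and>
     (\<forall>x\<in>Lam a. \<forall>y\<in>Lam a. \<rho> (gmul x y) = gmul (\<rho> x) (\<rho> y)) \<and>
     (\<forall>x\<in>Lam a. geven x \<longrightarrow> geven (\<rho> x)) \<and>
     (\<forall>x\<in>Lam a. godd x \<longrightarrow> godd (\<rho> x))"

text \<open>Elements of (E0 \<otimes> Lambda_even) \<oplus> (E1 \<otimes> Lambda_odd) for Lambda = Lambda_n, written
  as sum over I of lambda_I \<otimes> v I.\<close>
definition Ebar :: "'e::lcs set \<Rightarrow> 'e set \<Rightarrow> nat \<Rightarrow> (nat set \<Rightarrow> 'e) set" where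
  "Ebar E0 E1 n = {v. \<forall>I. (I \<subseteq> {1..n} \<longrightarrow> v I \<in> parity_part E0 E1 (card I)) \<and>
                          (\<not> I \<subseteq> {1..n} \<longrightarrow> v I = 0)}"

text \<open>E-bar applied to a morphism rho : Lambda_a \<rightarrow> Lambda_b, i.e. id \<otimes> rho.\<close>
definition Ebar_map :: "nat \<Rightarrow> ((nat set \<Rightarrow> real) \<Rightarrow> (nat set \<Rightarrow> real)) \<Rightarrow>
     (nat set \<Rightarrow> 'e::lcs) \<Rightarrow> (nat set \<Rightarrow> 'e)" where
  "Ebar_map a \<rho> v = (\<lambda>J. \<Sum>I\<in>Pow {1..a}. \<rho> (gbasis I) J *\<^sub>R v I)"

definition open_subfunctor :: "enat \<Rightarrow> 'e::lcs set \<Rightarrow> 'e set \<Rightarrow> (nat \<Rightarrow> (nat set \<Rightarrow> 'e) set) \<Rightarrow> bool" where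
  "open_subfunctor k E0 E1 U \<longleftrightarrow>
     (\<forall>n. enat n \<le> k \<longrightarrow> openin (top_of_set (Ebar E0 E1 n)) (U n)) \<and>
     (\<forall>a b \<rho>. enat a \<le> k \<longrightarrow> enat b \<le> k \<longrightarrow> gr_hom a b \<rho> \<longrightarrow> Ebar_map a \<rho> ` U a \<subseteq> U b)"

definition nat_trans ::
  "enat \<Rightarrow> 'e::lcs set \<Rightarrow> 'e set \<Rightarrow> 'f::lcs set \<Rightarrow> 'f set \<Rightarrow> (nat \<Rightarrow> (nat set \<Rightarrow> 'e) set) \<Rightarrow>
   (nat \<Rightarrow> (nat set \<Rightarrow> 'e) \<Rightarrow> (nat set \<Rightarrow> 'f)) \<Rightarrow> bool" where
  "nat_trans k E0 E1 F0 F1 U f \<longleftrightarrow>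
     (\<forall>n. enat n \<le> k \<longrightarrow> f n ` U n \<subseteq> Ebar F0 F1 n) \<and>
     (\<forall>a b \<rho>. enat a \<le> k \<longrightarrow> enat b \<le> k \<longrightarrow> gr_hom a b \<rho> \<longrightarrow>
        (\<forall>v\<in>U a. f b (Ebar_map a \<rho> v) = Ebar_map a \<rho> (f a v)))"

definition diff_quot :: "((nat set \<Rightarrow> 'e::lcs) \<Rightarrow> (nat set \<Rightarrow> 'f::lcs)) \<Rightarrow>
    (nat set \<Rightarrow> 'e) \<Rightarrow> (nat set \<Rightarrow> 'e) \<Rightarrow> real \<Rightarrow> (nat set \<Rightarrow> 'f)" where
  "diff_quot g x h t = (\<lambda>I. (1 / t) *\<^sub>R (g (\<lambda>J. x J + t *\<^sub>R h J) I - g x I))"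

definition dirder :: "((nat set \<Rightarrow> 'e::lcs) \<Rightarrow> (nat set \<Rightarrow> 'f::lcs)) \<Rightarrow>
    (nat set \<Rightarrow> 'e) \<Rightarrow> (nat set \<Rightarrow> 'e) \<Rightarrow> (nat set \<Rightarrow> 'f)" where
  "dirder g x h = (THE L. (diff_quot g x h \<longlongrightarrow> L) (at (0::real)))"

text \<open>Iterated derivative: dn g [h1,...,hn] x = d^n g(x)(h1,...,hn).\<close>
definition dn :: "((nat set \<Rightarrow> 'e::lcs) \<Rightarrow> (nat set \<Rightarrow> 'f::lcs)) \<Rightarrow>
    (nat set \<Rightarrow> 'e) list \<Rightarrow> (nat set \<Rightarrow> 'e) \<Rightarrow> (nat set \<Rightarrow> 'f)" where
  "dn g hs = fold (\<lambda>h g'. (\<lambda>x. dirder g' x h)) hs g"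

definition bastiani_smooth_on :: "(nat set \<Rightarrow> 'e::lcs) set \<Rightarrow> (nat set \<Rightarrow> 'e) set \<Rightarrow>
    ((nat set \<Rightarrow> 'e) \<Rightarrow> (nat set \<Rightarrow> 'f::lcs)) \<Rightarrow> bool" where
  "bastiani_smooth_on V U g \<longleftrightarrow>
     (\<forall>hs x h. set hs \<subseteq> V \<longrightarrow> x \<in> U \<longrightarrow> h \<in> V \<longrightarrow>
        (\<exists>L. (diff_quot (dn g hs) x h \<longlongrightarrow> L) (at 0))) \<and>
     (\<forall>n. continuous_map
        (prod_topology (top_of_set U) (product_topology (\<lambda>_. top_of_set V) {..<n}))
        euclidean (\<lambda>(x, hs). dn g (map hs [0..<n]) x))"

definition lam_tensor :: "(nat set \<Rightarrow> real) \<Rightarrow> 'f::lcs set \<Rightarrow> (nat set \<Rightarrow> 'f) set" where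
  "lam_tensor a S = {(\<lambda>K. a K *\<^sub>R w) | w. w \<in> S}"

definition lam_prod :: "nat set list \<Rightarrow> (nat set \<Rightarrow> real)" where
  "lam_prod Is = foldr (\<lambda>I a. gmul (gbasis I) a) Is gone"

end

theory Submission
  imports Defs
begin

text \<open>The rescalings \<open>\<lambda>\<^sub>j \<mapsto> s \<lambda>\<^sub>j\<close> are endomorphisms of \<open>\<Lambda>\<^sub>m\<close> in \<open>Gr\<^sup>(\<^sup>k\<^sup>)\<close>, so by
  naturality \<open>f\<^sub>\<Lambda>\<^sub>m\<close> commutes with them, and hence so do its iterated derivatives. They fix the
  real point x and act on \<open>y\<^sub>i \<in> \<lambda>\<^sub>I\<^sub>i E\<close> by the factor s or 1 according to whether
  \<open>j \<in> I\<^sub>i\<close>; by multilinearity the derivative gets the factor \<open>s\<^sup>c\<close>, c the number of \<open>I\<^sub>i\<close>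
  containing j. Comparing with the action on the coefficient of \<open>\<lambda>\<^sub>K\<close> shows that a nonzero
  coefficient forces \<open>c \<le> 1\<close> for every j and \<open>K = \<Union>I\<^sub>i\<close>: the derivative vanishes unless the
  \<open>I\<^sub>i\<close> are disjoint, and is then a multiple of \<open>\<lambda>\<^sub>I\<^sub>1\<cdots>\<lambda>\<^sub>I\<^sub>n = \<pm>\<lambda>\<^sub>\<Union>\<^sub>I\<^sub>i\<close> with coefficient in
  the correct parity part of F.\<close>

section \<open>Limits in locally convex spaces\<close>

lemma tendsto_fun_iff:
  "((f::'a \<Rightarrow> 'b \<Rightarrow> 'c::topological_space) \<longlongrightarrow> l) F \<longleftrightarrow> (\<forall>i. ((\<lambda>x. f x i) \<longlongrightarrow> l i) F)"
proof -
  have "(f \<longlongrightarrow> l) F \<longleftrightarrow> limitin (product_topology (\<lambda>i. euclidean) UNIV) f l F"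
    by (simp add: euclidean_product_topology)
  also have "\<dots> \<longleftrightarrow> (\<forall>i. ((\<lambda>x. f x i) \<longlongrightarrow> l i) F)"
    by (simp add: limitin_componentwise)
  finally show ?thesis .
qed

lemma tendsto_scaleR_right_lcs:
  fixes g :: "'x \<Rightarrow> 'e::lcs"
  assumes "(g \<longlongrightarrow> a) F"
  shows "((\<lambda>t. c *\<^sub>R g t) \<longlongrightarrow> c *\<^sub>R a) F"
proof (rule topological_tendstoI)
  fix W :: "'e set" assume W: "open W" "c *\<^sub>R a \<in> W"
  from scaleR_continuous[OF W] obtain \<epsilon> V where
    V: "open V" "a \<in> V" "\<forall>d y. \<bar>d - c\<bar> < \<epsilon> \<longrightarrow> y \<in> V \<longrightarrow> d *\<^sub>R y \<in> W" and "\<epsilon> > 0"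
    by blast
  have "eventually (\<lambda>t. g t \<in> V) F" using assms V(1,2) topological_tendstoD by blast
  then show "eventually (\<lambda>t. c *\<^sub>R g t \<in> W) F"
    by (rule eventually_mono) (use V \<open>\<epsilon> > 0\<close> in auto)
qed

lemma tendsto_scaleR_left_lcs:
  fixes v :: "'e::lcs"
  assumes "(g \<longlongrightarrow> c) F"
  shows "((\<lambda>t. g t *\<^sub>R v) \<longlongrightarrow> c *\<^sub>R v) F"
proof (rule topological_tendstoI)
  fix W :: "'e set" assume W: "open W" "c *\<^sub>R v \<in> W"
  from scaleR_continuous[OF W] obtain \<epsilon> V where
    V: "\<epsilon> > 0" "v \<in> V" "\<forall>d y. \<bar>d - c\<bar> < \<epsilon> \<longrightarrow> y \<in> V \<longrightarrow> d *\<^sub>R y \<in> W" by blast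
  have "eventually (\<lambda>t. dist (g t) c < \<epsilon>) F" using assms V(1) tendstoD by blast
  then show "eventually (\<lambda>t. g t *\<^sub>R v \<in> W) F"
    by (rule eventually_mono) (use V in \<open>auto simp: dist_real_def\<close>)
qed

lemma tendsto_fun_scaleR_lcs:
  fixes g :: "'x \<Rightarrow> 'i \<Rightarrow> 'e::lcs"
  assumes "(g \<longlongrightarrow> L) F"
  shows "((\<lambda>t J. c J *\<^sub>R g t J) \<longlongrightarrow> (\<lambda>J. c J *\<^sub>R L J)) F"
  using assms unfolding tendsto_fun_iff by (simp add: tendsto_scaleR_right_lcs)

lemma tendsto_line:
  fixes w h :: "'i \<Rightarrow> 'e::lcs"
  shows "((\<lambda>t::real. \<lambda>J. w J + t *\<^sub>R h J) \<longlongrightarrow> w) (at 0)"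
proof -
  have "((\<lambda>t::real. w J + t *\<^sub>R h J) \<longlongrightarrow> w J + 0 *\<^sub>R h J) (at 0)" for J
    by (intro tendsto_add tendsto_const tendsto_scaleR_left_lcs tendsto_ident_at)
  then show ?thesis by (simp add: tendsto_fun_iff)
qed

lemma filterlim_mult_left_at_0:
  fixes a :: real
  assumes "a \<noteq> 0"
  shows "filterlim (\<lambda>t. a * t) (at 0) (at 0)"
  unfolding filterlim_at
proof
  show "eventually (\<lambda>t. a * t \<in> UNIV \<and> a * t \<noteq> 0) (at 0)"
    using assms by (auto simp: eventually_at_filter)
  show "((\<lambda>t. a * t) \<longlongrightarrow> 0) (at 0)"
    using tendsto_mult[OF tendsto_const[of a] tendsto_ident_at[of 0 UNIV]] by simp
qed

lemma dirder_eqI: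
  assumes "(diff_quot g x h \<longlongrightarrow> L) (at 0)"
  shows "dirder g x h = L"
  unfolding dirder_def
proof (rule the_equality)
  fix L' assume L': "(diff_quot g x h \<longlongrightarrow> L') (at 0)"
  show "L' = L"
  proof
    fix J
    from L' assms have "((\<lambda>t. diff_quot g x h t J) \<longlongrightarrow> L' J) (at 0)"
      "((\<lambda>t. diff_quot g x h t J) \<longlongrightarrow> L J) (at 0)"
      by (simp_all add: tendsto_fun_iff)
    then show "L' J = L J" by (rule tendsto_unique[OF at_neq_bot])
  qed
qed (fact assms)

lemma dn_Nil [simp]: "dn g [] = g"
  by (simp add: dn_def)

lemma dn_snoc: "dn g (hs @ [h]) = (\<lambda>x. dirder (dn g hs) x h)"
  by (simp add: dn_def)

section \<open>Super vector spaces\<close>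

lemma subspace_parity_part: "super_lcs E0 E1 \<Longrightarrow> subspace (parity_part E0 E1 p)"
  by (simp add: super_lcs_def parity_part_def)

lemma closed_parity_part:
  assumes "super_lcs E0 E1"
  shows "closed (parity_part E0 E1 q)"
proof -
  from assms obtain p where p: "continuous_on UNIV p" "\<forall>a\<in>E0. \<forall>b\<in>E1. p (a + b) = a"
    and dec: "\<forall>v. \<exists>a\<in>E0. \<exists>b\<in>E1. v = a + b" and "subspace E0" "subspace E1"
    unfolding super_lcs_def by (elim conjE exE) (rule that)
  then have "0 \<in> E0" "0 \<in> E1" by (simp_all add: subspace_0)
  have "E0 = {v. p v = v}"
  proof safe
    fix v assume "v \<in> E0"
    then have "p (v + 0) = v" using p(2) \<open>0 \<in> E1\<close> by blast
    then show "p v = v" by simp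
  next
    fix v assume "p v = v"
    obtain a b where "a \<in> E0" "b \<in> E1" "v = a + b" using dec by blast
    with \<open>p v = v\<close> p(2) show "v \<in> E0" by metis
  qed
  moreover have "E1 = {v. p v = 0}"
  proof safe
    fix v assume "v \<in> E1"
    then have "p (0 + v) = 0" using p(2) \<open>0 \<in> E0\<close> by blast
    then show "p v = 0" by simp
  next
    fix v assume "p v = 0"
    obtain a b where "a \<in> E0" "b \<in> E1" "v = a + b" using dec by blast
    with \<open>p v = 0\<close> p(2) show "v \<in> E1" by (metis add.left_neutral)
  qed
  moreover have "closed {v. p v = v}" "closed {v. p v = 0}"
    using closed_Collect_eq[OF p(1) continuous_on_id] closed_Collect_eq[OF p(1) continuous_on_const]
    by simp_all
  ultimately show ?thesis by (simp add: parity_part_def)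
qed

lemma Ebar_lincomb:
  assumes "super_lcs E0 E1" "v \<in> Ebar E0 E1 n" "u \<in> Ebar E0 E1 n"
  shows "(\<lambda>J. a *\<^sub>R v J + b *\<^sub>R u J) \<in> Ebar E0 E1 n"
  unfolding Ebar_def
proof (intro CollectI allI conjI impI)
  fix I assume "I \<subseteq> {1..n}"
  then have "v I \<in> parity_part E0 E1 (card I)" "u I \<in> parity_part E0 E1 (card I)"
    using assms(2,3) unfolding Ebar_def by blast+
  then show "a *\<^sub>R v I + b *\<^sub>R u I \<in> parity_part E0 E1 (card I)"
    using subspace_parity_part[OF assms(1)] by (intro subspace_add subspace_scale)
next
  fix I assume "\<not> I \<subseteq> {1..n}"
  then have "v I = 0" "u I = 0"
    using assms(2,3) unfolding Ebar_def by blast+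
  then show "a *\<^sub>R v I + b *\<^sub>R u I = 0" by simp
qed

lemma Ebar_scale:
  assumes "super_lcs E0 E1" "v \<in> Ebar E0 E1 n"
  shows "(\<lambda>J. c J *\<^sub>R v J) \<in> Ebar E0 E1 n"
  unfolding Ebar_def
proof (intro CollectI allI conjI impI)
  fix I assume "I \<subseteq> {1..n}"
  then have "v I \<in> parity_part E0 E1 (card I)"
    using assms(2) unfolding Ebar_def by blast
  then show "c I *\<^sub>R v I \<in> parity_part E0 E1 (card I)"
    using subspace_parity_part[OF assms(1)] by (intro subspace_scale)
next
  fix I assume "\<not> I \<subseteq> {1..n}"
  then have "v I = 0" using assms(2) unfolding Ebar_def by blast
  then show "c I *\<^sub>R v I = 0" by simp
qed

lemma closed_Ebar:
  assumes "super_lcs E0 E1"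
  shows "closed (Ebar E0 E1 n)"
proof -
  have "Ebar E0 E1 n =
      (\<Inter>I. {v. v I \<in> (if I \<subseteq> {1..n} then parity_part E0 E1 (card I) else {0})})"
    unfolding Ebar_def set_eq_iff by (simp; meson singletonD singletonI)
  moreover have "closed {v. v I \<in> (if I \<subseteq> {1..n} then parity_part E0 E1 (card I) else {0})}" for I
    by (rule closed_vimage[where f="\<lambda>v. v I", unfolded vimage_def])
       (auto simp: closed_parity_part[OF assms])
  ultimately show ?thesis by auto
qed

lemma eventually_line_in_openin_Ebar:
  assumes "super_lcs E0 E1" "openin (top_of_set (Ebar E0 E1 n)) W" "w \<in> W" "h \<in> Ebar E0 E1 n"
  shows "eventually (\<lambda>t::real. (\<lambda>J. w J + t *\<^sub>R h J) \<in> W) (at 0)"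
proof -
  from assms(2) obtain S where S: "open S" "W = S \<inter> Ebar E0 E1 n" by (auto simp: openin_open)
  have "eventually (\<lambda>t::real. (\<lambda>J. w J + t *\<^sub>R h J) \<in> S) (at 0)"
    using topological_tendstoD[OF tendsto_line S(1)] assms(3) S(2) by blast
  moreover have "(\<lambda>J. w J + t *\<^sub>R h J) \<in> Ebar E0 E1 n" for t
    using Ebar_lincomb[OF assms(1), of w n h 1 t] assms S by auto
  ultimately show ?thesis using S(2) by (auto elim: eventually_mono)
qed

section \<open>Iterated directional derivatives\<close>

locale directionally_smooth =
  fixes V W :: "(nat set \<Rightarrow> 'e::lcs) set" and G :: "(nat set \<Rightarrow> 'e) \<Rightarrow> (nat set \<Rightarrow> 'f::lcs)"
  assumes eventually_line_in:
      "w \<in> W \<Longrightarrow> h \<in> V \<Longrightarrow> eventually (\<lambda>t::real. (\<lambda>J. w J + t *\<^sub>R h J) \<in> W) (at 0)"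
    and diff_quot_convergent:
      "set hs \<subseteq> V \<Longrightarrow> w \<in> W \<Longrightarrow> h \<in> V \<Longrightarrow> \<exists>L. (diff_quot (dn G hs) w h \<longlongrightarrow> L) (at 0)"
begin

lemma dn_mem_closed_subspace:
  assumes closed: "closed S"
    and lincomb: "\<And>u v a b. u \<in> S \<Longrightarrow> v \<in> S \<Longrightarrow> (\<lambda>J. a *\<^sub>R u J + b *\<^sub>R v J) \<in> S"
    and G: "\<And>w. w \<in> W \<Longrightarrow> G w \<in> S"
  shows "set hs \<subseteq> V \<Longrightarrow> w \<in> W \<Longrightarrow> dn G hs w \<in> S"
proof (induction hs arbitrary: w rule: rev_induct)
  case Nil
  then show ?case by (simp add: G)
next
  case (snoc h hs)
  have hs: "set hs \<subseteq> V" and h: "h \<in> V" using snoc.prems by auto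
  from diff_quot_convergent[OF hs snoc.prems(2) h] obtain L
    where L: "(diff_quot (dn G hs) w h \<longlongrightarrow> L) (at 0)" by blast
  have "eventually (\<lambda>t. diff_quot (dn G hs) w h t \<in> S) (at 0)"
    using eventually_line_in[OF snoc.prems(2) h]
  proof (rule eventually_mono)
    fix t :: real assume wt: "(\<lambda>J. w J + t *\<^sub>R h J) \<in> W"
    have "(\<lambda>J. (1/t) *\<^sub>R dn G hs (\<lambda>J. w J + t *\<^sub>R h J) J + (- (1/t)) *\<^sub>R dn G hs w J) \<in> S"
      by (rule lincomb) (use snoc.IH[OF hs wt] snoc.IH[OF hs snoc.prems(2)] in auto)
    then show "diff_quot (dn G hs) w h t \<in> S"
      unfolding diff_quot_def by (simp add: scaleR_diff_right)
  qed
  then have "L \<in> S" using Lim_in_closed_set[OF closed _ _ L] by simp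
  moreover have "dirder (dn G hs) w h = L" using L by (rule dirder_eqI)
  ultimately show ?case by (simp add: dn_snoc)
qed

lemma dn_equivariant:
  assumes G: "\<And>w. w \<in> W \<Longrightarrow> G (\<lambda>J. c J *\<^sub>R w J) = (\<lambda>J. c J *\<^sub>R G w J)"
  shows "set hs \<subseteq> V \<Longrightarrow> w \<in> W \<Longrightarrow>
     dn G (map (\<lambda>h J. c J *\<^sub>R h J) hs) (\<lambda>J. c J *\<^sub>R w J) = (\<lambda>J. c J *\<^sub>R dn G hs w J)"
proof (induction hs arbitrary: w rule: rev_induct)
  case Nil
  then show ?case by (simp add: G)
next
  case (snoc h hs)
  let ?c = "\<lambda>v J. c J *\<^sub>R v J"
  have hs: "set hs \<subseteq> V" and h: "h \<in> V" using snoc.prems by auto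
  from diff_quot_convergent[OF hs snoc.prems(2) h] obtain L
    where L: "(diff_quot (dn G hs) w h \<longlongrightarrow> L) (at 0)" by blast
  have "eventually (\<lambda>t. ?c (diff_quot (dn G hs) w h t)
      = diff_quot (dn G (map ?c hs)) (?c w) (?c h) t) (at 0)"
    using eventually_line_in[OF snoc.prems(2) h]
  proof (rule eventually_mono)
    fix t :: real assume wt: "(\<lambda>J. w J + t *\<^sub>R h J) \<in> W"
    have "(\<lambda>J. c J *\<^sub>R w J + t *\<^sub>R c J *\<^sub>R h J) = ?c (\<lambda>J. w J + t *\<^sub>R h J)"
      by (simp add: scaleR_add_right mult.commute)
    then show "?c (diff_quot (dn G hs) w h t) = diff_quot (dn G (map ?c hs)) (?c w) (?c h) t"
      unfolding diff_quot_def using snoc.IH[OF hs wt] snoc.IH[OF hs snoc.prems(2)]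
      by (simp add: scaleR_diff_right)
  qed
  then have "(diff_quot (dn G (map ?c hs)) (?c w) (?c h) \<longlongrightarrow> ?c L) (at 0)"
    by (rule Lim_transform_eventually[OF tendsto_fun_scaleR_lcs[OF L]])
  then have "dirder (dn G (map ?c hs)) (?c w) (?c h) = ?c L" by (rule dirder_eqI)
  moreover have "dirder (dn G hs) w h = L" using L by (rule dirder_eqI)
  ultimately show ?case by (simp add: dn_snoc)
qed

lemma dn_scaleR_directions:
  assumes V: "\<And>h a. h \<in> V \<Longrightarrow> (\<lambda>J. a *\<^sub>R h J) \<in> V"
  shows "set (map snd ps) \<subseteq> V \<Longrightarrow> (\<forall>p\<in>set ps. fst p \<noteq> 0) \<Longrightarrow> w \<in> W \<Longrightarrow>
     dn G (map (\<lambda>(a, h) J. a *\<^sub>R h J) ps) w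
       = (\<lambda>J. prod_list (map fst ps) *\<^sub>R dn G (map snd ps) w J)"
proof (induction ps arbitrary: w rule: rev_induct)
  case Nil
  then show ?case by simp
next
  case (snoc p ps)
  obtain a h where p: "p = (a, h)" by (cases p)
  define P where "P = prod_list (map fst ps)"
  define D where "D = dn G (map snd ps)"
  define D' where "D' = dn G (map (\<lambda>(a, h) J. a *\<^sub>R h J) ps)"
  have hs: "set (map snd ps) \<subseteq> V" and h: "h \<in> V" and "a \<noteq> 0"
    and nz: "\<forall>p\<in>set ps. fst p \<noteq> 0" using snoc.prems p by auto
  have IH: "\<And>w. w \<in> W \<Longrightarrow> D' w = (\<lambda>J. P *\<^sub>R D w J)"
    using snoc.IH[OF hs nz] unfolding D'_def D_def P_def by blast
  from diff_quot_convergent[OF hs snoc.prems(3) h] obtain L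
    where L: "(diff_quot D w h \<longlongrightarrow> L) (at 0)" unfolding D_def by blast
  have lim: "((\<lambda>t. diff_quot D w h (a * t)) \<longlongrightarrow> L) (at 0)"
    using filterlim_compose[OF L filterlim_mult_left_at_0[OF \<open>a \<noteq> 0\<close>]] .
  \<comment> \<open>a step t in direction a h is a step a t in direction h\<close>
  have "eventually (\<lambda>t. (\<lambda>J. (P * a) *\<^sub>R diff_quot D w h (a * t) J)
        = diff_quot D' w (\<lambda>J. a *\<^sub>R h J) t) (at 0)"
    using eventually_conj[OF eventually_line_in[OF snoc.prems(3) V[OF h, of a]]
        eventually_neq_at_within[of 0 0 UNIV]]
  proof (rule eventually_mono)
    fix t :: real assume wt: "(\<lambda>J. w J + t *\<^sub>R a *\<^sub>R h J) \<in> W \<and> t \<noteq> 0"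
    have line: "(\<lambda>J. w J + t *\<^sub>R a *\<^sub>R h J) = (\<lambda>J. w J + (a * t) *\<^sub>R h J)"
      by (simp add: mult.commute)
    have quot: "(1 / t) *\<^sub>R (P *\<^sub>R x - P *\<^sub>R y) = (P * a) *\<^sub>R ((1 / (a * t)) *\<^sub>R (x - y))" for x y :: 'f
      using \<open>a \<noteq> 0\<close> wt by (simp add: scaleR_diff_right)
    show "(\<lambda>J. (P * a) *\<^sub>R diff_quot D w h (a * t) J) = diff_quot D' w (\<lambda>J. a *\<^sub>R h J) t"
      unfolding diff_quot_def using IH[OF conjunct1[OF wt]] IH[OF snoc.prems(3)]
      by (simp add: line quot mult.commute)
  qed
  then have "(diff_quot D' w (\<lambda>J. a *\<^sub>R h J) \<longlongrightarrow> (\<lambda>J. (P * a) *\<^sub>R L J)) (at 0)"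
    by (rule Lim_transform_eventually[OF tendsto_fun_scaleR_lcs[OF lim]])
  then have "dirder D' w (\<lambda>J. a *\<^sub>R h J) = (\<lambda>J. (P * a) *\<^sub>R L J)" by (rule dirder_eqI)
  moreover have "dirder D w h = L" using L by (rule dirder_eqI)
  ultimately show ?case unfolding p by (simp add: dn_snoc D'_def D_def P_def mult.commute)
qed

end

section \<open>Grassmann algebras\<close>

definition lam_scale :: "nat \<Rightarrow> real \<Rightarrow> nat set \<Rightarrow> real" where
  "lam_scale j s K = (if j \<in> K then s else 1)"

text \<open>The Grassmann algebra endomorphism determined by \<open>\<lambda>\<^sub>j \<mapsto> s \<lambda>\<^sub>j\<close> (all other generators fixed).\<close>
definition lam_rescale :: "nat \<Rightarrow> real \<Rightarrow> (nat set \<Rightarrow> real) \<Rightarrow> (nat set \<Rightarrow> real)" where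
  "lam_rescale j s a = (\<lambda>K. lam_scale j s K * a K)"

lemma lam_scale_split: "I \<subseteq> K \<Longrightarrow> lam_scale j s K = lam_scale j s I * lam_scale j s (K - I)"
  by (auto simp: lam_scale_def)

lemma gmul_lam_rescale: "lam_rescale j s (gmul x y) = gmul (lam_rescale j s x) (lam_rescale j s y)"
proof
  fix K
  have "lam_rescale j s (gmul x y) K
      = (\<Sum>I\<in>Pow K. lam_scale j s K * (gsign I (K - I) * x I * y (K - I)))"
    by (simp add: lam_rescale_def gmul_def sum_distrib_left)
  also have "\<dots> = (\<Sum>I\<in>Pow K.
      gsign I (K - I) * (lam_scale j s I * x I) * (lam_scale j s (K - I) * y (K - I)))"
    by (rule sum.cong) (auto simp: lam_scale_split[of _ K j s])
  also have "\<dots> = gmul (lam_rescale j s x) (lam_rescale j s y) K"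
    by (simp add: lam_rescale_def gmul_def)
  finally show "lam_rescale j s (gmul x y) K = gmul (lam_rescale j s x) (lam_rescale j s y) K" .
qed

lemma gr_hom_lam_rescale: "gr_hom m m (lam_rescale j s)"
  unfolding gr_hom_def
  by (intro conjI ballI allI impI gmul_lam_rescale)
     (auto simp: Lam_def lam_rescale_def gone_def gbasis_def lam_scale_def geven_def godd_def
       algebra_simps)

lemma Ebar_map_lam_rescale:
  assumes "v \<in> Ebar E0 E1 m"
  shows "Ebar_map m (lam_rescale j s) v = (\<lambda>J. lam_scale j s J *\<^sub>R v J)"
proof
  fix J
  have "Ebar_map m (lam_rescale j s) v J
      = (\<Sum>I\<in>Pow {1..m}. (if I = J then lam_scale j s J *\<^sub>R v J else 0))"
    unfolding Ebar_map_def lam_rescale_def gbasis_def by (rule sum.cong) auto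
  also have "\<dots> = lam_scale j s J *\<^sub>R v J"
    using assms by (auto simp: Ebar_def)
  finally show "Ebar_map m (lam_rescale j s) v J = lam_scale j s J *\<^sub>R v J" .
qed

lemma gr_hom_inclusion_0: "gr_hom 0 m id"
  unfolding gr_hom_def by (auto simp: Lam_def)

lemma Ebar_map_inclusion_0:
  assumes "v \<in> Ebar E0 E1 0"
  shows "Ebar_map 0 id v = v"
proof
  fix J
  have "Ebar_map 0 id v J = gbasis {} J *\<^sub>R v {}" by (simp add: Ebar_map_def)
  also have "\<dots> = v J" using assms by (auto simp: gbasis_def Ebar_def)
  finally show "Ebar_map 0 id v J = v J" .
qed

lemma gmul_gbasis:
  assumes "finite I" "finite J" "I \<inter> J = {}"
  shows "gmul (gbasis I) (\<lambda>K. \<sigma> * gbasis J K) = (\<lambda>K. (\<sigma> * gsign I J) * gbasis (I \<union> J) K)"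
proof
  fix K
  show "gmul (gbasis I) (\<lambda>K. \<sigma> * gbasis J K) K = (\<sigma> * gsign I J) * gbasis (I \<union> J) K"
  proof (cases "finite K")
    case True
    have "gmul (gbasis I) (\<lambda>K. \<sigma> * gbasis J K) K
        = (\<Sum>I'\<in>Pow K. if I' = I then gsign I (K - I) * (\<sigma> * gbasis J (K - I)) else 0)"
      unfolding gmul_def by (rule sum.cong) (auto simp: gbasis_def)
    also have "\<dots> = (if I \<subseteq> K then gsign I (K - I) * (\<sigma> * gbasis J (K - I)) else 0)"
      using True by simp
    also have "\<dots> = (\<sigma> * gsign I J) * gbasis (I \<union> J) K"
      using assms(3) by (cases "K = I \<union> J") (auto simp: gbasis_def Un_Diff)
    finally show ?thesis .
  next
    case False
    then have "K \<noteq> I \<union> J" using assms by auto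
    with False show ?thesis by (simp add: gmul_def gbasis_def)
  qed
qed

lemma lam_prod_disjoint:
  assumes "\<forall>I\<in>set Is. finite I" "sorted_wrt (\<lambda>A B. A \<inter> B = {}) Is"
  shows "\<exists>\<sigma>. \<sigma> \<noteq> 0 \<and> lam_prod Is = (\<lambda>K. \<sigma> * gbasis (\<Union>(set Is)) K)"
  using assms
proof (induction Is)
  case Nil
  then show ?case by (intro exI[of _ 1]) (simp add: lam_prod_def gone_def)
next
  case (Cons I Is)
  then obtain \<sigma> where \<sigma>: "\<sigma> \<noteq> 0" "lam_prod Is = (\<lambda>K. \<sigma> * gbasis (\<Union>(set Is)) K)"
    by auto
  have "I \<inter> \<Union>(set Is) = {}" "finite I" "finite (\<Union>(set Is))"
    using Cons.prems by auto
  then have "lam_prod (I # Is) = (\<lambda>K. (\<sigma> * gsign I (\<Union>(set Is))) * gbasis (\<Union>(set (I # Is))) K)"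
    by (simp add: lam_prod_def \<sigma>(2)[unfolded lam_prod_def] gmul_gbasis)
  moreover have "\<sigma> * gsign I (\<Union>(set Is)) \<noteq> 0"
    using \<sigma>(1) by (simp add: gsign_def)
  ultimately show ?case by blast
qed

lemma lam_tensor_gbasis_subset_Ebar:
  assumes "super_lcs E0 E1" "I \<subseteq> {1..n}"
  shows "lam_tensor (gbasis I) (parity_part E0 E1 (card I)) \<subseteq> Ebar E0 E1 n"
proof
  fix v assume "v \<in> lam_tensor (gbasis I) (parity_part E0 E1 (card I))"
  then obtain w where "w \<in> parity_part E0 E1 (card I)" "v = (\<lambda>K. gbasis I K *\<^sub>R w)"
    unfolding lam_tensor_def by blast
  with assms subspace_0[OF subspace_parity_part[OF assms(1)]] show "v \<in> Ebar E0 E1 n"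
    by (auto simp: Ebar_def gbasis_def)
qed

lemma mem_lam_tensorI:
  assumes "subspace S" "a = (\<lambda>K. \<sigma> * gbasis L K)" "\<sigma> \<noteq> 0"
    and "\<And>K. K \<noteq> L \<Longrightarrow> z K = 0" "z L \<in> S"
  shows "z \<in> lam_tensor a S"
proof -
  have "z = (\<lambda>K. a K *\<^sub>R ((1 / \<sigma>) *\<^sub>R z L))"
    using assms(2-4) by (auto simp: gbasis_def)
  moreover have "(1 / \<sigma>) *\<^sub>R z L \<in> S"
    using assms(1,5) by (rule subspace_scale)
  ultimately show ?thesis unfolding lam_tensor_def by blast
qed

lemma sorted_wrt_disjoint_map_upt:
  "disjoint_family_on I {1..n} \<Longrightarrow> sorted_wrt (\<lambda>A B. A \<inter> B = {}) (map I [1..<n+1])"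
  unfolding sorted_wrt_map
  by (rule sorted_wrt_mono_rel[OF _ sorted_wrt_upt])
     (auto simp: disjoint_family_on_def simp del: upt_Suc)

section \<open>Derivatives of smooth natural transformations\<close>

locale smooth_superfunction =
  fixes k :: enat and E0 E1 :: "'e::lcs set" and F0 F1 :: "'f::lcs set"
    and U :: "nat \<Rightarrow> (nat set \<Rightarrow> 'e) set" and f :: "nat \<Rightarrow> (nat set \<Rightarrow> 'e) \<Rightarrow> (nat set \<Rightarrow> 'f)"
  assumes super_E: "super_lcs E0 E1" and super_F: "super_lcs F0 F1"
    and open_U: "open_subfunctor k E0 E1 U"
    and natural: "nat_trans k E0 E1 F0 F1 U f"
    and smooth: "\<And>j. enat j \<le> k \<Longrightarrow> bastiani_smooth_on (Ebar E0 E1 j) (U j) (f j)"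
begin

lemma U_subset_Ebar: "enat j \<le> k \<Longrightarrow> U j \<subseteq> Ebar E0 E1 j"
  using open_U unfolding open_subfunctor_def by (auto dest: openin_imp_subset)

lemma U_0_subset_Ebar: "U 0 \<subseteq> Ebar E0 E1 0"
  by (rule U_subset_Ebar) (simp add: zero_enat_def[symmetric])

context
  fixes m :: nat assumes mk: "enat m \<le> k"
begin

lemma directionally_smooth: "directionally_smooth (Ebar E0 E1 m) (U m) (f m)"
proof
  show "eventually (\<lambda>t::real. (\<lambda>J. w J + t *\<^sub>R h J) \<in> U m) (at 0)"
    if "w \<in> U m" "h \<in> Ebar E0 E1 m" for w h
    using eventually_line_in_openin_Ebar[OF super_E _ that] open_U mk
    unfolding open_subfunctor_def by blast
  show "\<exists>L. (diff_quot (dn (f m) hs) w h \<longlongrightarrow> L) (at 0)"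
    if "set hs \<subseteq> Ebar E0 E1 m" "w \<in> U m" "h \<in> Ebar E0 E1 m" for hs w h
    using smooth[OF mk] that unfolding bastiani_smooth_on_def by blast
qed

lemma U_0_subset: "U 0 \<subseteq> U m"
proof
  fix x assume x: "x \<in> U 0"
  have "enat 0 \<le> k" by (simp add: zero_enat_def[symmetric])
  then have "Ebar_map 0 id ` U 0 \<subseteq> U m"
    using open_U mk gr_hom_inclusion_0[of m] unfolding open_subfunctor_def by blast
  then show "x \<in> U m" using x U_0_subset_Ebar Ebar_map_inclusion_0 by force
qed

lemma f_lam_scale:
  assumes "w \<in> U m"
  shows "f m (\<lambda>J. lam_scale j s J *\<^sub>R w J) = (\<lambda>J. lam_scale j s J *\<^sub>R f m w J)"
proof -
  have "f m (Ebar_map m (lam_rescale j s) w) = Ebar_map m (lam_rescale j s) (f m w)"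
    using natural mk gr_hom_lam_rescale assms unfolding nat_trans_def by blast
  moreover have "f m w \<in> Ebar F0 F1 m"
    using natural mk assms unfolding nat_trans_def by blast
  ultimately show ?thesis
    using assms U_subset_Ebar[OF mk] by (auto simp: Ebar_map_lam_rescale)
qed

lemma dn_mem_Ebar:
  assumes "set hs \<subseteq> Ebar E0 E1 m" "w \<in> U m"
  shows "dn (f m) hs w \<in> Ebar F0 F1 m"
  using natural mk assms unfolding nat_trans_def
  by (intro directionally_smooth.dn_mem_closed_subspace[OF directionally_smooth
        closed_Ebar[OF super_F] Ebar_lincomb[OF super_F]]) auto

lemma dn_lam_scale_eigen:
  assumes x: "x \<in> U 0"
    and ps: "\<And>a h. (a, h) \<in> set ps \<Longrightarrow>
       a \<noteq> 0 \<and> h \<in> Ebar E0 E1 m \<and> (\<lambda>J. lam_scale j s J *\<^sub>R h J) = (\<lambda>J. a *\<^sub>R h J)"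
  shows "(\<lambda>J. lam_scale j s J *\<^sub>R dn (f m) (map snd ps) x J)
       = (\<lambda>J. prod_list (map fst ps) *\<^sub>R dn (f m) (map snd ps) x J)"
proof -
  interpret directionally_smooth "Ebar E0 E1 m" "U m" "f m" by (rule directionally_smooth)
  have "x \<in> Ebar E0 E1 0" using x U_0_subset_Ebar by blast
  have x_fixed: "(\<lambda>J. lam_scale j s J *\<^sub>R x J) = x"
  proof
    fix J
    show "lam_scale j s J *\<^sub>R x J = x J"
      using \<open>x \<in> Ebar E0 E1 0\<close> by (cases "J = {}") (auto simp: Ebar_def lam_scale_def)
  qed
  have hs: "set (map snd ps) \<subseteq> Ebar E0 E1 m" using ps by fastforce
  have "dn (f m) (map (\<lambda>h J. lam_scale j s J *\<^sub>R h J) (map snd ps)) (\<lambda>J. lam_scale j s J *\<^sub>R x J)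
      = (\<lambda>J. lam_scale j s J *\<^sub>R dn (f m) (map snd ps) x J)"
    using dn_equivariant[OF f_lam_scale hs] x U_0_subset by blast
  then have "(\<lambda>J. lam_scale j s J *\<^sub>R dn (f m) (map snd ps) x J)
      = dn (f m) (map (\<lambda>h J. lam_scale j s J *\<^sub>R h J) (map snd ps)) x"
    by (simp only: x_fixed)
  also have "map (\<lambda>h J. lam_scale j s J *\<^sub>R h J) (map snd ps) = map (\<lambda>(a, h) J. a *\<^sub>R h J) ps"
    using ps by (auto simp: case_prod_beta)
  also have "dn (f m) \<dots> x = (\<lambda>J. prod_list (map fst ps) *\<^sub>R dn (f m) (map snd ps) x J)"
    using dn_scaleR_directions[OF Ebar_scale[OF super_E] hs] ps x U_0_subset by fastforce
  finally show ?thesis .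
qed

context
  fixes x :: "nat set \<Rightarrow> 'e" and n :: nat and I :: "nat \<Rightarrow> nat set" and y :: "nat \<Rightarrow> nat set \<Rightarrow> 'e"
  assumes x: "x \<in> U 0" and I: "\<And>i. i \<in> {1..n} \<Longrightarrow> I i \<subseteq> {1..m}"
    and y: "\<And>i. i \<in> {1..n} \<Longrightarrow> y i \<in> lam_tensor (gbasis (I i)) (parity_part E0 E1 (card (I i)))"
begin

lemma y_mem_Ebar:
  assumes "i \<in> {1..n}"
  shows "y i \<in> Ebar E0 E1 m"
  using y[OF assms] lam_tensor_gbasis_subset_Ebar[OF super_E I[OF assms]] by blast

text \<open>Rescaling \<open>\<lambda>\<^sub>j\<close> by 2 multiplies the coefficient of \<open>\<lambda>\<^sub>K\<close> by 2 if \<open>j \<in> K\<close>, and the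
  derivative by \<open>2\<^sup>c\<close>, where c is the number of the \<open>I\<^sub>i\<close> containing j.\<close>
lemma dn_support_count:
  assumes "dn (f m) (map y [1..<n+1]) x K \<noteq> 0"
  shows "card {i\<in>{1..n}. j \<in> I i} = (if j \<in> K then 1 else 0)"
proof -
  define ps where "ps = map (\<lambda>i. (lam_scale j 2 (I i), y i)) [1..<n+1]"
  have "(\<lambda>J. lam_scale j 2 J *\<^sub>R y i J) = (\<lambda>J. lam_scale j 2 (I i) *\<^sub>R y i J)"
    if "i \<in> {1..n}" for i
    using y[OF that] by (auto simp: lam_tensor_def gbasis_def)
  then have eigen: "(\<lambda>J. lam_scale j 2 J *\<^sub>R dn (f m) (map snd ps) x J)
      = (\<lambda>J. prod_list (map fst ps) *\<^sub>R dn (f m) (map snd ps) x J)"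
    using y_mem_Ebar
    by (intro dn_lam_scale_eigen[OF x]) (auto simp: ps_def lam_scale_def split: if_splits)
  have ys: "map snd ps = map y [1..<n+1]" by (simp add: ps_def)
  have "prod_list (map fst ps) = (\<Prod>i\<in>{1..n}. lam_scale j 2 (I i))"
    by (simp add: ps_def prod.distinct_set_conv_list[symmetric] atLeastLessThanSuc_atLeastAtMost
        del: upt_Suc)
  also have "\<dots> = 2 ^ card {i\<in>{1..n}. j \<in> I i}"
    using prod.inter_filter[of "{1..n}" "\<lambda>_. 2::real" "\<lambda>i. j \<in> I i"]
    by (simp add: lam_scale_def if_distrib prod.If_cases)
  finally have "lam_scale j 2 K *\<^sub>R dn (f m) (map y [1..<n+1]) x K
      = 2 ^ card {i\<in>{1..n}. j \<in> I i} *\<^sub>R dn (f m) (map y [1..<n+1]) x K"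
    using fun_cong[OF eigen, of K] unfolding ys by simp
  then have "lam_scale j 2 K = 2 ^ card {i\<in>{1..n}. j \<in> I i}"
    using assms by simp
  then have "(2::real) ^ (if j \<in> K then 1 else 0) = 2 ^ card {i\<in>{1..n}. j \<in> I i}"
    by (cases "j \<in> K") (simp_all add: lam_scale_def)
  then have "(if j \<in> K then 1 else 0) = card {i\<in>{1..n}. j \<in> I i}"
    by (rule power_inject_exp[THEN iffD1, rotated]) simp
  then show ?thesis by simp
qed

lemma dn_support:
  assumes "dn (f m) (map y [1..<n+1]) x K \<noteq> 0"
  shows "K = (\<Union>i\<in>{1..n}. I i)"
proof (intro set_eqI iffI)
  fix j assume "j \<in> K"
  then have "card {i\<in>{1..n}. j \<in> I i} \<noteq> 0" using dn_support_count[OF assms, of j] by simp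
  then have "{i\<in>{1..n}. j \<in> I i} \<noteq> {}" by (metis card.empty)
  then show "j \<in> (\<Union>i\<in>{1..n}. I i)" by blast
next
  fix j assume "j \<in> (\<Union>i\<in>{1..n}. I i)"
  then have "{i\<in>{1..n}. j \<in> I i} \<noteq> {}" by blast
  then have "card {i\<in>{1..n}. j \<in> I i} \<noteq> 0" by simp
  then show "j \<in> K" using dn_support_count[OF assms, of j] by (simp split: if_splits)
qed

lemma dn_eq_0_if_not_disjoint:
  assumes "\<not> disjoint_family_on I {1..n}"
  shows "dn (f m) (map y [1..<n+1]) x = (\<lambda>_. 0)"
proof
  fix K
  obtain i i' j where "i \<in> {1..n}" "i' \<in> {1..n}" "i \<noteq> i'" "j \<in> I i" "j \<in> I i'"
    using assms unfolding disjoint_family_on_def by blast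
  then have "card {i, i'} \<le> card {i\<in>{1..n}. j \<in> I i}" by (intro card_mono) auto
  then have "2 \<le> card {i\<in>{1..n}. j \<in> I i}" using \<open>i \<noteq> i'\<close> by simp
  then show "dn (f m) (map y [1..<n+1]) x K = 0"
    using dn_support_count[of K j]
    by (cases "dn (f m) (map y [1..<n+1]) x K = 0") (auto split: if_splits)
qed

lemma dn_mem_lam_tensor:
  "dn (f m) (map y [1..<n+1]) x
     \<in> lam_tensor (lam_prod (map I [1..<n+1])) (parity_part F0 F1 (card (\<Union>i\<in>{1..n}. I i)))"
  (is "?z \<in> lam_tensor _ (parity_part F0 F1 (card ?L))")
proof (cases "disjoint_family_on I {1..n}")
  case True
  have "finite (I i)" if "i \<in> {1..n}" for i
    by (rule finite_subset[OF I[OF that]]) simp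
  then have "\<forall>J\<in>set (map I [1..<n+1]). finite J" by (auto simp del: upt_Suc)
  moreover have "\<Union>(set (map I [1..<n+1])) = ?L"
    by (simp add: atLeastLessThanSuc_atLeastAtMost del: upt_Suc)
  ultimately obtain \<sigma> where \<sigma>: "\<sigma> \<noteq> 0" "lam_prod (map I [1..<n+1]) = (\<lambda>K. \<sigma> * gbasis ?L K)"
    using lam_prod_disjoint[OF _ sorted_wrt_disjoint_map_upt[OF True]] by metis
  have "?z \<in> Ebar F0 F1 m"
    using y_mem_Ebar x U_0_subset by (intro dn_mem_Ebar) (auto simp del: upt_Suc)
  moreover have "?L \<subseteq> {1..m}" using I by blast
  ultimately have "?z ?L \<in> parity_part F0 F1 (card ?L)" by (simp add: Ebar_def)
  show ?thesis
  proof (rule mem_lam_tensorI[OF subspace_parity_part[OF super_F] \<sigma>(2,1)])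
    show "?z K = 0" if "K \<noteq> ?L" for K
      using dn_support that by blast
  qed fact
next
  case False
  then have "?z = (\<lambda>K. lam_prod (map I [1..<n+1]) K *\<^sub>R 0)"
    using dn_eq_0_if_not_disjoint by simp
  then show ?thesis
    using subspace_0[OF subspace_parity_part[OF super_F]] unfolding lam_tensor_def by blast
qed

end

end

end

theorem mainTheorem2:
  fixes k :: enat
    and E0 E1 :: "'e::lcs set" and F0 F1 :: "'f::lcs set"
    and U :: "nat \<Rightarrow> (nat set \<Rightarrow> 'e) set"
    and f :: "nat \<Rightarrow> (nat set \<Rightarrow> 'e) \<Rightarrow> (nat set \<Rightarrow> 'f)"
    and n m :: nat
    and x :: "nat set \<Rightarrow> 'e"
    and I :: "nat \<Rightarrow> nat set"
    and y :: "nat \<Rightarrow> (nat set \<Rightarrow> 'e)"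
  assumes E: "super_lcs E0 E1" and F: "super_lcs F0 F1"
    and U: "open_subfunctor k E0 E1 U"
    and f: "nat_trans k E0 E1 F0 F1 U f"
    and smooth: "\<And>j. enat j \<le> k \<Longrightarrow> bastiani_smooth_on (Ebar E0 E1 j) (U j) (f j)"
    and n: "n \<ge> 1" and m: "m \<ge> 1" and mk: "enat m \<le> k"
    and x: "x \<in> U 0"
    and I: "\<And>i. i \<in> {1..n} \<Longrightarrow> I i \<noteq> {} \<and> I i \<subseteq> {1..m}"
    and y: "\<And>i. i \<in> {1..n} \<Longrightarrow> y i \<in> lam_tensor (gbasis (I i)) (parity_part E0 E1 (card (I i)))"
  shows "dn (f m) (map y [1..<n+1]) x \<in>
           lam_tensor (lam_prod (map I [1..<n+1]))
             (parity_part F0 F1 (card (\<Union>i\<in>{1..n}. I i))) \<and>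
         (\<not> disjoint_family_on I {1..n} \<longrightarrow> dn (f m) (map y [1..<n+1]) x = (\<lambda>_. 0))"
proof -
  interpret smooth_superfunction k E0 E1 F0 F1 U f
    using E F U f smooth by unfold_locales
  have I_sub: "\<And>i. i \<in> {1..n} \<Longrightarrow> I i \<subseteq> {1..m}" using I by blast
  show ?thesis
  proof (intro conjI impI)
    show "dn (f m) (map y [1..<n+1]) x \<in> lam_tensor (lam_prod (map I [1..<n+1]))
        (parity_part F0 F1 (card (\<Union>i\<in>{1..n}. I i)))"
      by (rule dn_mem_lam_tensor[OF mk x]) (fact I_sub, fact y)
    show "dn (f m) (map y [1..<n+1]) x = (\<lambda>_. 0)" if "\<not> disjoint_family_on I {1..n}"
      by (rule dn_eq_0_if_not_disjoint[OF mk x _ _ that]) (fact I_sub, fact y)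
  qed
qed

end
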